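(* Let $n\geq3$, $1>R>0$, $\rho\in(0,\frac R2)$, $n>\alpha>2$ and $f_0>0$ with $f_0>\frac{2n}{\alpha}(n-2)(n-\alpha)$, and let $F$ be as in the context. Define $h:=(n-\alpha)(3n-4)-f_0$, fix $\xi\in(4-\frac4n,4]$ and fix $\delta\in(0,1)$ with $$\delta>\max\left\{\frac{n-\alpha}{n},\ \frac{h+\sqrt{h^2+4f_0(n-\alpha)^2}}{2n(n-\alpha)}\right\}.$$ Then there exist positive constants $a,b,k_0,K_0$ depending only on $n,f_0,\alpha,\xi$ and $\delta$ such that for every $\gamma>\frac{4}{R-\rho}$ the function $\varphi:(0,\infty)\to\mathbb{R}$, $$\varphi(s):=\begin{cases}\frac{a}{\gamma^\delta}s^{-\delta}-b,& s<\frac{\xi}{\gamma},\\ e^{-\gamma s},& s\geq\frac{\xi}{\gamma},\end{cases}$$ is positive, belongs to $W^{2,\infty}_{loc}((0,\infty))$, and satisfies $$n^2s^{\frac{2n-2}{n}}\varphi_{ss}+4(n^2-n)s^{\frac{n-2}{n}}\varphi_s-nF\varphi_s-nF_s\varphi\geq k_0\gamma^{\frac2n}\varphi\quad\text{a.e. in }(0,\infty),$$ as well as $$\int_0^\infty\frac{\varphi^2(s)}{|\varphi_s(s)|}\,ds\leq\frac{K_0}{\gamma^2}.$$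
   Context: $F(s):=\int_0^{s^{1/n}}f(r)r^{n-1}\,dr$ for $s\geq0$, where $f:(0,\infty)\to[0,\infty)$ is smooth and monotonically decreasing with $f(r)=f_0r^{-\alpha}$ whenever $r^n\leq R-\rho$ and $f(r)=0$ whenever $r^n\geq R+\rho$. Consequently $F$ is smooth and nondecreasing, $F_s(s)=\frac1nf(s^{1/n})$ is nonincreasing, $F(s)=\frac{f_0}{n-\alpha}s^{\frac{n-\alpha}{n}}$ and $F_s(s)=\frac{f_0}{n}s^{-\frac{\alpha}{n}}$ for $0<s\leq R-\rho$, $F_s(s)=0$ for $s\geq R+\rho$, and $F\leq\frac{f_0}{n-\alpha}(R+\rho)^{\frac{n-\alpha}{n}}$. *)

theory Defs
  imports "HOL-Analysis.Analysis"
begin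

definition smooth_on :: "real set \<Rightarrow> (real \<Rightarrow> real) \<Rightarrow> bool" where
  "smooth_on U f \<longleftrightarrow> (\<forall>k. \<forall>x\<in>U. ((deriv ^^ k) f) differentiable (at x))"

definition Fpot :: "nat \<Rightarrow> (real \<Rightarrow> real) \<Rightarrow> real \<Rightarrow> real" where
  "Fpot n f s = (LBINT r=0..root n s. f r * r ^ (n - 1))"

text \<open>W^{2,infinity}_loc on an open interval U of the real line, via its standard
  one-dimensional characterisation (continuous representative): the function is
  differentiable on U and its derivative is Lipschitz on every compact subset of U.\<close>
definition W2inf_loc :: "real set \<Rightarrow> (real \<Rightarrow> real) \<Rightarrow> bool" where
  "W2inf_loc U \<phi> \<longleftrightarrow> (\<forall>s\<in>U. \<phi> differentiable (at s)) \<and>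
     (\<forall>K. compact K \<and> K \<subseteq> U \<longrightarrow> (\<exists>L. L-lipschitz_on K (deriv \<phi>)))"

end

theory Submission
  imports Defs
begin

text \<open>
  The barrier is a power profile \<open>a \<gamma>\<^sup>-\<^sup>\<delta> s\<^sup>-\<^sup>\<delta> - b\<close> on \<open>(0, \<xi>/\<gamma>)\<close>, glued in a \<open>C\<^sup>1\<close> way to
  \<open>e\<^sup>-\<^sup>\<gamma>\<^sup>s\<close>; the constants \<open>a, b\<close> only depend on \<open>\<xi>, \<delta>\<close> because the junction sits at \<open>\<gamma> s = \<xi>\<close>.
  Since \<open>\<gamma> > 4/(R - \<rho>)\<close>, the power branch lies in the region where \<open>F\<close> is the explicit
  power \<open>f\<^sub>0 s\<^bsup>(n-\<alpha>)/n\<^esup>/(n - \<alpha>)\<close>; there the operator applied to \<open>\<phi>\<close> is a combination of powers of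
  \<open>s\<close>, and for \<open>s \<le> 1\<close> and \<open>\<alpha> \<ge> 2\<close> it is bounded below by a multiple of \<open>s\<^bsup>-2/n\<^esup> \<phi>\<close> whose
  coefficient, a quadratic in \<open>\<delta>\<close>, is positive by the choice of \<open>\<delta>\<close>. On the exponential branch
  the second-order terms equal \<open>n \<gamma> s\<^bsup>(n-2)/n\<^esup> (n \<gamma> s - 4(n - 1)) \<phi>\<close>, positive as \<open>\<gamma> s \<ge> \<xi> > 4 - 4/n\<close>,
  while the \<open>F\<close>-terms give \<open>n \<phi> (\<gamma> F - F\<^sub>s) \<ge> 0\<close> because \<open>F\<close> increases, \<open>F\<^sub>s\<close> decreases and
  \<open>\<gamma> F \<ge> F\<^sub>s\<close> already holds at the junction. Splitting the integral at the junction, the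
  power branch contributes at most \<open>\<xi>\<^sup>3 e\<^sup>-\<^sup>\<xi>/(\<delta>\<^sup>2 \<gamma>\<^sup>2)\<close> and the exponential one \<open>e\<^sup>-\<^sup>\<xi>/\<gamma>\<^sup>2\<close>.
\<close>

lemma powr_add_eq:
  fixes x :: real
  assumes "p + q = r"
  shows "x powr p * x powr q = x powr r"
  using assms by (simp add: powr_add[symmetric])

lemma has_field_derivative_if_glue:
  fixes p q :: "real \<Rightarrow> real"
  assumes p: "(p has_field_derivative D) (at c)" and q: "(q has_field_derivative D) (at c)"
    and pq: "p c = q c"
  shows "((\<lambda>x. if x < c then p x else q x) has_field_derivative D) (at c)"
proof -
  let ?h = "\<lambda>x. if x < c then p x else q x"
  have p': "((\<lambda>y. (p y - p c) / (y - c)) \<longlongrightarrow> D) (at c)"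
    and q': "((\<lambda>y. (q y - q c) / (y - c)) \<longlongrightarrow> D) (at c)"
    using p q by (simp_all add: has_field_derivative_iff)
  have "((\<lambda>y. (?h y - ?h c) / (y - c)) \<longlongrightarrow> D) (at c)"
  proof (rule filterlim_split_at)
    show "((\<lambda>y. (?h y - ?h c) / (y - c)) \<longlongrightarrow> D) (at_left c)"
      by (rule Lim_transform_eventually[OF tendsto_mono[OF at_le p']])
         (auto simp: eventually_at_filter pq)
    show "((\<lambda>y. (?h y - ?h c) / (y - c)) \<longlongrightarrow> D) (at_right c)"
      by (rule Lim_transform_eventually[OF tendsto_mono[OF at_le q']])
         (auto simp: eventually_at_filter)
  qed
  thus ?thesis by (simp add: has_field_derivative_iff)
qed

lemma lipschitz_on_atLeastAtMost_if_deriv_bounded: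
  fixes f f' :: "real \<Rightarrow> real"
  assumes "\<And>x. x \<in> {a..b} \<Longrightarrow> (f has_real_derivative f' x) (at x)"
    and "\<And>x. x \<in> {a..b} \<Longrightarrow> \<bar>f' x\<bar> \<le> L" and "0 \<le> L"
  shows "L-lipschitz_on {a..b} f"
proof (rule bounded_derivative_imp_lipschitz[where f' = "\<lambda>x. (*) (f' x)"])
  show "(f has_derivative (*) (f' x)) (at x within {a..b})" if "x \<in> {a..b}" for x
    using assms(1)[OF that] by (simp add: has_field_derivative_def has_derivative_at_withinI)
  have "onorm ((*) (f' x)) = \<bar>f' x\<bar>" for x
  proof -
    have "(*) (f' x) = (\<lambda>h. h *\<^sub>R f' x)" by (simp add: fun_eq_iff)
    thus ?thesis using onorm_scaleR_left[OF bounded_linear_ident, of "f' x"] by (simp add: onorm_id)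
  qed
  thus "onorm ((*) (f' x)) \<le> L" if "x \<in> {a..b}" for x
    using assms(2)[OF that] by simp
qed (use assms(3) in auto)


section \<open>The potential F\<close>

lemma smooth_on_imp_isCont: "smooth_on U f \<Longrightarrow> x \<in> U \<Longrightarrow> isCont f x"
  unfolding smooth_on_def by (metis funpow_0 differentiable_imp_continuous_within)

locale power_law_profile =
  fixes n :: nat and \<alpha> f\<^sub>0 T :: real and f :: "real \<Rightarrow> real"
  assumes n_pos: "0 < n" and alpha_less: "\<alpha> < real n" and T_pos: "0 < T"
    and cont: "\<And>r. 0 < r \<Longrightarrow> isCont f r"
    and nonneg: "\<And>r. 0 < r \<Longrightarrow> 0 \<le> f r"
    and antimono: "antimono_on {0<..} f"
    and power_law: "\<And>r. 0 < r \<Longrightarrow> r ^ n \<le> T \<Longrightarrow> f r = f\<^sub>0 * r powr (-\<alpha>)"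
begin

lemma interval_integral_power_law:
  assumes u: "0 < u" "u ^ n \<le> T"
  shows "set_integrable lborel (einterval 0 u) (\<lambda>r. f r * r ^ (n - 1))"
    and "(LBINT r=0..u. f r * r ^ (n - 1)) = f\<^sub>0 / (real n - \<alpha>) * u powr (real n - \<alpha>)"
proof -
  let ?P = "\<lambda>r. f\<^sub>0 / (real n - \<alpha>) * r powr (real n - \<alpha>)"
  have D: "(?P has_real_derivative f x * x ^ (n - 1)) (at x)" if "0 < x" "x < u" for x
  proof -
    have "x ^ n \<le> u ^ n" using that by (intro power_mono) auto
    hence fx: "f x = f\<^sub>0 * x powr (-\<alpha>)" using power_law that u by auto
    have "x ^ (n - 1) = x powr (real n - 1)"
      using powr_realpow[OF that(1), of "n - 1"] n_pos by simp
    hence "f x * x ^ (n - 1) = f\<^sub>0 * (x powr (-\<alpha>) * x powr (real n - 1))" by (simp add: fx)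
    also have "\<dots> = f\<^sub>0 * x powr (real n - \<alpha> - 1)"
      using powr_add_eq[of "-\<alpha>" "real n - 1" "real n - \<alpha> - 1" x] by simp
    finally have "f x * x ^ (n - 1) = f\<^sub>0 * x powr (real n - \<alpha> - 1)" .
    moreover have "(?P has_real_derivative
        f\<^sub>0 / (real n - \<alpha>) * ((real n - \<alpha>) * x powr (real n - \<alpha> - 1))) (at x)"
      using that by (auto intro!: derivative_eq_intros)
    ultimately show ?thesis using alpha_less by simp
  qed
  have lim0: "((?P \<circ> real_of_ereal) \<longlongrightarrow> 0) (at_right (ereal 0))"
    unfolding ereal_tendsto_simps using alpha_less
    by (auto intro!: tendsto_eq_intros tendsto_zero_powrI eventually_at_rightI[of 0 1])
  have limu: "((?P \<circ> real_of_ereal) \<longlongrightarrow> ?P u) (at_left (ereal u))"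
    unfolding ereal_tendsto_simps using u alpha_less by (auto intro!: tendsto_eq_intros)
  have D': "\<And>x. ereal 0 < ereal x \<Longrightarrow> ereal x < ereal u \<Longrightarrow>
      (?P has_real_derivative f x * x ^ (n - 1)) (at x)"
    using D by simp
  have cont': "\<And>x. ereal 0 < ereal x \<Longrightarrow> ereal x < ereal u \<Longrightarrow> isCont (\<lambda>r. f r * r ^ (n - 1)) x"
    by (intro continuous_intros cont) simp
  have nonneg': "AE x in lborel. ereal 0 < ereal x \<longrightarrow> ereal x < ereal u \<longrightarrow> 0 \<le> f x * x ^ (n - 1)"
    by (rule AE_I2) (auto intro!: mult_nonneg_nonneg nonneg)
  have "ereal 0 < ereal u" using u by simp
  note FTC = interval_integral_FTC_nonneg[OF this D' cont' nonneg' lim0 limu]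
  \<comment> \<open>\<open>simp only\<close>: the full simpset would rewrite \<open>ereal 0\<close> back to \<open>0\<close> and loop.\<close>
  show "set_integrable lborel (einterval 0 u) (\<lambda>r. f r * r ^ (n - 1))"
    using FTC(1) by (simp only: zero_ereal_def)
  show "(LBINT r=0..u. f r * r ^ (n - 1)) = ?P u"
    using FTC(2) by (simp only: zero_ereal_def diff_zero)
qed

lemma set_integrable_radial_density:
  fixes v :: real
  assumes v: "0 < v"
  shows "set_integrable lborel (einterval 0 v) (\<lambda>r. f r * r ^ (n - 1))"
proof -
  define w where "w = min v (root n T)"
  have w: "0 < w" "w \<le> v" using v T_pos n_pos by (auto simp: w_def)
  have "w ^ n \<le> root n T ^ n" using w by (intro power_mono) (auto simp: w_def)
  hence "w ^ n \<le> T" using T_pos n_pos by simp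
  hence "set_integrable lborel (einterval 0 w) (\<lambda>r. f r * r ^ (n - 1))"
    by (rule interval_integral_power_law(1)[OF w(1)])
  moreover have "set_integrable lborel {w..v} (\<lambda>r. f r * r ^ (n - 1))"
    using w by (intro borel_integrable_atLeastAtMost' continuous_at_imp_continuous_on ballI
        continuous_intros cont) auto
  ultimately have "set_integrable lborel (einterval 0 w \<union> {w..v}) (\<lambda>r. f r * r ^ (n - 1))"
    by (rule set_integrable_Un) auto
  thus ?thesis
    by (rule set_integrable_subset) (auto simp: einterval_iff)
qed

lemma has_real_derivative_radial_integral:
  assumes u: "0 < u"
  shows "((\<lambda>v. LBINT r=0..v. f r * r ^ (n - 1)) has_real_derivative f u * u ^ (n - 1)) (at u)"
proof -
  let ?g = "\<lambda>r. f r * r ^ (n - 1)"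
  have "((\<lambda>v. LBINT r=u/2..v. ?g r) has_vector_derivative ?g u) (at u within {u/2..u+1})"
    using u by (intro interval_integral_FTC2 continuous_at_imp_continuous_on ballI
        continuous_intros cont) auto
  hence "((\<lambda>v. LBINT r=u/2..v. ?g r) has_real_derivative ?g u) (at u)"
    using u by (simp add: has_real_derivative_iff_has_vector_derivative at_within_Icc_at)
  hence "((\<lambda>v. (LBINT r=0..u/2. ?g r) + (LBINT r=u/2..v. ?g r)) has_real_derivative ?g u) (at u)"
    by (auto intro!: derivative_eq_intros)
  thus ?thesis
  proof (rule has_field_derivative_transform_within_open)
    fix v assume v: "v \<in> {u/2<..<u+1}"
    hence "0 < v" using u by simp
    have "interval_lebesgue_integrable lborel 0 (ereal v) ?g"
      using set_integrable_radial_density[OF \<open>0 < v\<close>] \<open>0 < v\<close>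
      by (simp add: interval_lebesgue_integrable_def)
    moreover have "min 0 (min (ereal (u/2)) (ereal v)) = 0"
      "max 0 (max (ereal (u/2)) (ereal v)) = ereal v" using v u by (auto simp: min_def max_def)
    ultimately show "(LBINT r=0..u/2. ?g r) + (LBINT r=u/2..v. ?g r) = (LBINT r=0..v. ?g r)"
      by (intro interval_integral_sum) simp
  qed (use u in auto)
qed

lemma Fpot_has_real_derivative:
  assumes s: "0 < s"
  shows "(Fpot n f has_real_derivative f (root n s) / real n) (at s)"
proof -
  have "((\<lambda>s. LBINT r=0..root n s. f r * r ^ (n - 1)) has_real_derivative
      f (root n s) * root n s ^ (n - 1) * inverse (real n * root n s ^ (n - Suc 0))) (at s)"
    using s n_pos by (intro DERIV_chain2[OF has_real_derivative_radial_integral DERIV_real_root]) auto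
  moreover have "f (root n s) * root n s ^ (n - 1) * inverse (real n * root n s ^ (n - Suc 0))
      = f (root n s) / real n"
    using s n_pos by (simp add: field_simps)
  ultimately show ?thesis by (simp add: Fpot_def[abs_def])
qed

lemma deriv_Fpot: "0 < s \<Longrightarrow> deriv (Fpot n f) s = f (root n s) / real n"
  by (rule DERIV_imp_deriv[OF Fpot_has_real_derivative])

lemma Fpot_mono:
  assumes "0 < s" "s \<le> t"
  shows "Fpot n f s \<le> Fpot n f t"
proof (rule DERIV_nonneg_imp_nondecreasing[OF assms(2)])
  fix x assume "s \<le> x"
  hence "0 < x" using assms by simp
  thus "\<exists>y. (Fpot n f has_real_derivative y) (at x) \<and> 0 \<le> y"
    using Fpot_has_real_derivative nonneg n_pos by (intro exI conjI) (auto intro: divide_nonneg_nonneg)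
qed

lemma density_root_eq_power_law:
  assumes "0 < s" "s \<le> T"
  shows "f (root n s) = f\<^sub>0 * s powr (-\<alpha> / real n)"
proof -
  have "f (root n s) = f\<^sub>0 * root n s powr (-\<alpha>)"
    using assms n_pos by (intro power_law) auto
  thus ?thesis
    using assms n_pos by (simp add: root_powr_inverse powr_powr)
qed

lemma Fpot_eq_power_law:
  assumes "0 < s" "s \<le> T"
  shows "Fpot n f s = f\<^sub>0 / (real n - \<alpha>) * s powr ((real n - \<alpha>) / real n)"
proof -
  have "Fpot n f s = f\<^sub>0 / (real n - \<alpha>) * root n s powr (real n - \<alpha>)"
    using interval_integral_power_law(2)[of "root n s"] assms n_pos by (simp add: Fpot_def)
  thus ?thesis
    using assms n_pos by (simp add: root_powr_inverse powr_powr)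
qed

lemma density_root_le_Fpot:
  assumes alpha: "0 \<le> \<alpha>" and f0: "0 \<le> f\<^sub>0"
    and c: "0 < c" "c \<le> T" "1 \<le> \<gamma> * c" and s: "c \<le> s"
  shows "f (root n s) / real n \<le> \<gamma> * Fpot n f s"
proof -
  have c_pow: "c powr ((real n - \<alpha>) / real n) = c * c powr (-\<alpha> / real n)"
    using c(1) n_pos powr_add[of c 1 "-\<alpha> / real n"] by (simp add: diff_divide_distrib)
  have "f (root n s) \<le> f (root n c)"
    using c s n_pos by (intro monotone_onD[OF antimono]) auto
  hence "f (root n s) / real n \<le> f\<^sub>0 / real n * c powr (-\<alpha> / real n)"
    using density_root_eq_power_law[OF c(1,2)] by (simp add: divide_right_mono)
  also have "\<dots> \<le> f\<^sub>0 / (real n - \<alpha>) * c powr (-\<alpha> / real n)"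
    using alpha alpha_less f0 by (intro mult_right_mono divide_left_mono) auto
  also have "\<dots> \<le> \<gamma> * c * (f\<^sub>0 / (real n - \<alpha>) * c powr (-\<alpha> / real n))"
    using mult_right_mono[OF c(3), of "f\<^sub>0 / (real n - \<alpha>) * c powr (-\<alpha> / real n)"] alpha_less f0
    by simp
  also have "\<dots> = \<gamma> * Fpot n f c"
    using Fpot_eq_power_law[OF c(1,2)] c_pow by (simp add: ac_simps)
  also have "\<dots> \<le> \<gamma> * Fpot n f s"
    using c s zero_less_mult_pos2[of \<gamma> c] by (intro mult_left_mono Fpot_mono) auto
  finally show ?thesis .
qed

end


section \<open>The radial operator\<close>

definition radial_operator :: "nat \<Rightarrow> real \<Rightarrow> real \<Rightarrow> real \<Rightarrow> real \<Rightarrow> real \<Rightarrow> real \<Rightarrow> real" where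
  "radial_operator n s F F\<^sub>s v v\<^sub>s v\<^sub>s\<^sub>s =
     real n ^ 2 * s powr ((2 * real n - 2) / real n) * v\<^sub>s\<^sub>s
     + 4 * (real n ^ 2 - real n) * s powr ((real n - 2) / real n) * v\<^sub>s
     - real n * F * v\<^sub>s - real n * F\<^sub>s * v"

definition power_branch_gap :: "nat \<Rightarrow> real \<Rightarrow> real \<Rightarrow> real \<Rightarrow> real" where
  "power_branch_gap n \<alpha> f\<^sub>0 \<delta> =
     f\<^sub>0 * (real n * \<delta> / (real n - \<alpha>) - 1) - real n * \<delta> * (3 * real n - 4 - real n * \<delta>)"

text \<open>Multiplied by \<open>n - \<alpha>\<close>, the gap is a quadratic in \<open>\<delta>\<close> with leading coefficient
  \<open>n\<^sup>2 (n - \<alpha>)\<close>, whose larger root is the threshold below.\<close>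
lemma power_branch_gap_pos:
  fixes n :: nat and \<alpha> f\<^sub>0 \<delta> :: real
  assumes n: "0 < n" and alpha: "\<alpha> < real n" and f0: "0 \<le> f\<^sub>0"
    and delta: "((real n - \<alpha>) * (3 * real n - 4) - f\<^sub>0
        + sqrt (((real n - \<alpha>) * (3 * real n - 4) - f\<^sub>0)\<^sup>2 + 4 * f\<^sub>0 * (real n - \<alpha>)\<^sup>2))
      / (2 * real n * (real n - \<alpha>)) < \<delta>"
  shows "0 < power_branch_gap n \<alpha> f\<^sub>0 \<delta>"
proof -
  define N where "N = real n - \<alpha>"
  define h where "h = N * (3 * real n - 4) - f\<^sub>0"
  define D where "D = h\<^sup>2 + 4 * f\<^sub>0 * N\<^sup>2"
  have N: "0 < N" using alpha by (simp add: N_def)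
  have "(h + sqrt D) / (2 * real n * N) < \<delta>" using delta by (simp add: D_def h_def N_def)
  hence lt: "sqrt D < 2 * real n * N * \<delta> - h" using n N by (simp add: field_simps)
  moreover have "0 \<le> sqrt D" using f0 by (simp add: D_def)
  ultimately have "sqrt D < sqrt ((2 * real n * N * \<delta> - h)\<^sup>2)" by simp
  hence "D < (2 * real n * N * \<delta> - h)\<^sup>2" by (simp only: real_sqrt_less_iff)
  hence "0 < 4 * N * (real n ^ 2 * N * \<delta>\<^sup>2 - real n * \<delta> * h - f\<^sub>0 * N)"
    unfolding D_def by (simp add: algebra_simps power2_eq_square)
  hence "0 < real n ^ 2 * N * \<delta>\<^sup>2 - real n * \<delta> * h - f\<^sub>0 * N"
    using N by (simp add: zero_less_mult_iff)
  also have "\<dots> = power_branch_gap n \<alpha> f\<^sub>0 \<delta> * N"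
    using N unfolding power_branch_gap_def h_def N_def by (simp add: field_simps power2_eq_square)
  finally show ?thesis using N by (simp add: zero_less_mult_iff)
qed

lemma radial_operator_power_eq:
  fixes n :: nat and \<alpha> f\<^sub>0 \<delta> A b s :: real
  assumes n: "0 < n" and alpha: "\<alpha> < real n"
  shows "radial_operator n s (f\<^sub>0 / (real n - \<alpha>) * s powr ((real n - \<alpha>) / real n))
        (f\<^sub>0 / real n * s powr (-\<alpha> / real n)) (A * s powr (-\<delta>) - b)
        (- \<delta> * A * s powr (-\<delta> - 1)) (\<delta> * (\<delta> + 1) * A * s powr (-\<delta> - 2))
    = A * s powr (-\<delta>) * (f\<^sub>0 * (real n * \<delta> / (real n - \<alpha>) - 1) * s powr (-\<alpha> / real n)
        - real n * \<delta> * (3 * real n - 4 - real n * \<delta>) * s powr (-2 / real n))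
      + f\<^sub>0 * b * s powr (-\<alpha> / real n)"
proof -
  define Z where "Z = s powr (-\<delta>)"
  define X where "X = s powr (-2 / real n)"
  define Y where "Y = s powr (-\<alpha> / real n)"
  have e1: "s powr ((2 * real n - 2) / real n) * s powr (-\<delta> - 2) = Z * X"
    and e2: "s powr ((real n - 2) / real n) * s powr (-\<delta> - 1) = Z * X"
    and e3: "s powr ((real n - \<alpha>) / real n) * s powr (-\<delta> - 1) = Z * Y"
    unfolding Z_def X_def Y_def
    by (rule trans[OF powr_add_eq[OF refl] powr_add_eq[symmetric]]; use n in \<open>simp add: field_simps\<close>)+
  have t1: "real n ^ 2 * s powr ((2 * real n - 2) / real n) * (\<delta> * (\<delta> + 1) * A * s powr (-\<delta> - 2))
      = real n ^ 2 * \<delta> * (\<delta> + 1) * A * (Z * X)"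
    by (simp only: e1[symmetric]) (simp add: algebra_simps)
  have t2: "4 * (real n ^ 2 - real n) * s powr ((real n - 2) / real n) * (- \<delta> * A * s powr (-\<delta> - 1))
      = - 4 * (real n ^ 2 - real n) * \<delta> * A * (Z * X)"
    by (simp only: e2[symmetric]) (simp add: algebra_simps)
  have t3: "real n * (f\<^sub>0 / (real n - \<alpha>) * s powr ((real n - \<alpha>) / real n)) * (- \<delta> * A * s powr (-\<delta> - 1))
      = - real n * f\<^sub>0 / (real n - \<alpha>) * \<delta> * A * (Z * Y)"
    by (simp only: e3[symmetric]) (simp add: algebra_simps)
  have "radial_operator n s (f\<^sub>0 / (real n - \<alpha>) * s powr ((real n - \<alpha>) / real n))
        (f\<^sub>0 / real n * s powr (-\<alpha> / real n)) (A * s powr (-\<delta>) - b)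
        (- \<delta> * A * s powr (-\<delta> - 1)) (\<delta> * (\<delta> + 1) * A * s powr (-\<delta> - 2))
      = real n ^ 2 * \<delta> * (\<delta> + 1) * A * (Z * X) - 4 * (real n ^ 2 - real n) * \<delta> * A * (Z * X)
        + real n * f\<^sub>0 / (real n - \<alpha>) * \<delta> * A * (Z * Y) - f\<^sub>0 * Y * (A * Z - b)"
    using n unfolding radial_operator_def t1 t2 t3 by (simp add: X_def Y_def Z_def algebra_simps)
  also have "\<dots> = A * Z * (f\<^sub>0 * (real n * \<delta> / (real n - \<alpha>) - 1) * Y
      - real n * \<delta> * (3 * real n - 4 - real n * \<delta>) * X) + f\<^sub>0 * b * Y"
    using alpha by (simp add: field_simps power2_eq_square)
  finally show ?thesis by (simp add: X_def Y_def Z_def)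
qed

lemma radial_operator_power_ge:
  fixes n :: nat and \<alpha> f\<^sub>0 \<delta> A b s :: real
  assumes n: "0 < n" and alpha: "2 \<le> \<alpha>" "\<alpha> < real n" and f0: "0 \<le> f\<^sub>0"
    and s: "0 < s" "s \<le> 1" and A: "0 < A" and b: "0 \<le> b"
    and delta: "real n - \<alpha> \<le> real n * \<delta>" and gap: "0 \<le> power_branch_gap n \<alpha> f\<^sub>0 \<delta>"
  shows "power_branch_gap n \<alpha> f\<^sub>0 \<delta> * s powr (-2 / real n) * (A * s powr (-\<delta>) - b)
    \<le> radial_operator n s (f\<^sub>0 / (real n - \<alpha>) * s powr ((real n - \<alpha>) / real n))
        (f\<^sub>0 / real n * s powr (-\<alpha> / real n)) (A * s powr (-\<delta>) - b)
        (- \<delta> * A * s powr (-\<delta> - 1)) (\<delta> * (\<delta> + 1) * A * s powr (-\<delta> - 2))"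
proof -
  define Z where "Z = s powr (-\<delta>)"
  define X where "X = s powr (-2 / real n)"
  define Y where "Y = s powr (-\<alpha> / real n)"
  define C1 where "C1 = real n * \<delta> * (3 * real n - 4 - real n * \<delta>)"
  define C2 where "C2 = f\<^sub>0 * (real n * \<delta> / (real n - \<alpha>) - 1)"
  have pos: "0 < Z" "0 < X" "0 < Y" using s by (auto simp: Z_def X_def Y_def)
  have "X \<le> Y"
    unfolding X_def Y_def using s alpha n by (intro powr_mono') (auto simp: divide_right_mono)
  have "1 \<le> real n * \<delta> / (real n - \<alpha>)" using delta alpha by simp
  hence "0 \<le> C2" using f0 by (simp add: C2_def)
  have gap_eq: "power_branch_gap n \<alpha> f\<^sub>0 \<delta> = C2 - C1"
    by (simp add: power_branch_gap_def C1_def C2_def)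
  have "power_branch_gap n \<alpha> f\<^sub>0 \<delta> * X * (A * Z - b) \<le> (C2 - C1) * X * (A * Z)"
    using gap pos b unfolding gap_eq by (intro mult_left_mono) auto
  also have "\<dots> \<le> A * Z * (C2 * Y - C1 * X) + f\<^sub>0 * b * Y"
  proof -
    have "A * Z * X * C2 \<le> A * Z * Y * C2"
      using \<open>X \<le> Y\<close> \<open>0 \<le> C2\<close> pos A by (intro mult_right_mono mult_left_mono) auto
    moreover have "0 \<le> f\<^sub>0 * b * Y" using f0 b pos by simp
    ultimately show ?thesis by (simp add: algebra_simps)
  qed
  finally show ?thesis
    using radial_operator_power_eq[OF n alpha(2)] by (simp add: X_def Y_def Z_def C1_def C2_def)
qed

lemma radial_operator_exp_ge:
  fixes n :: nat and \<gamma> s F F\<^sub>s E :: real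
  assumes n: "0 < n" and s: "0 < s" and F: "F\<^sub>s \<le> \<gamma> * F" and E: "0 \<le> E"
  shows "real n * \<gamma> * s powr ((real n - 2) / real n) * (real n * \<gamma> * s - 4 * (real n - 1)) * E
    \<le> radial_operator n s F F\<^sub>s E (- \<gamma> * E) (\<gamma>\<^sup>2 * E)"
proof -
  have "s powr ((real n - 2) / real n) * s powr 1 = s powr ((2 * real n - 2) / real n)"
    using n by (intro powr_add_eq) (simp add: field_simps)
  hence pow: "s powr ((2 * real n - 2) / real n) = s powr ((real n - 2) / real n) * s"
    using s by simp
  have "radial_operator n s F F\<^sub>s E (- \<gamma> * E) (\<gamma>\<^sup>2 * E)
      = real n * \<gamma> * s powr ((real n - 2) / real n) * (real n * \<gamma> * s - 4 * (real n - 1)) * E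
        + real n * E * (\<gamma> * F - F\<^sub>s)"
    unfolding radial_operator_def pow by (simp add: power2_eq_square algebra_simps)
  moreover have "0 \<le> real n * E * (\<gamma> * F - F\<^sub>s)" using F E by simp
  ultimately show ?thesis by linarith
qed


section \<open>The barrier\<close>

text \<open>The constants are chosen so that the two branches of the barrier and their first
  derivatives agree at the junction \<open>s = \<xi> / \<gamma>\<close>, for every \<open>\<gamma>\<close>.\<close>
definition barrier_coeff :: "real \<Rightarrow> real \<Rightarrow> real" where
  "barrier_coeff \<xi> \<delta> = \<xi> powr (\<delta> + 1) * exp (-\<xi>) / \<delta>"

definition barrier_shift :: "real \<Rightarrow> real \<Rightarrow> real" where
  "barrier_shift \<xi> \<delta> = exp (-\<xi>) * (\<xi> / \<delta> - 1)"

locale barrier =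
  fixes \<xi> \<delta> \<gamma> :: real
  assumes delta_pos: "0 < \<delta>" and delta_le_xi: "\<delta> \<le> \<xi>" and gamma_pos: "0 < \<gamma>"
begin

text \<open>\<open>\<phi>\<close> is the function of the theorem with \<open>a = barrier_coeff \<xi> \<delta>\<close> and
  \<open>b = barrier_shift \<xi> \<delta>\<close>; \<open>\<phi>''\<close> is its second derivative only away from the junction \<open>c\<close>.\<close>

definition c :: real where "c = \<xi> / \<gamma>"

definition A :: real where "A = barrier_coeff \<xi> \<delta> / \<gamma> powr \<delta>"

definition \<phi> :: "real \<Rightarrow> real" where
  "\<phi> s = (if s < c then A * s powr (-\<delta>) - barrier_shift \<xi> \<delta> else exp (- \<gamma> * s))"

definition \<phi>' :: "real \<Rightarrow> real" where
  "\<phi>' s = (if s < c then - \<delta> * A * s powr (-\<delta> - 1) else - \<gamma> * exp (- \<gamma> * s))"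

definition \<phi>'' :: "real \<Rightarrow> real" where
  "\<phi>'' s = (if s < c then \<delta> * (\<delta> + 1) * A * s powr (-\<delta> - 2) else \<gamma>\<^sup>2 * exp (- \<gamma> * s))"

lemma xi_pos: "0 < \<xi>"
  using delta_pos delta_le_xi by simp

lemma c_pos: "0 < c"
  using xi_pos gamma_pos by (simp add: c_def)

lemma A_pos: "0 < A"
  using xi_pos delta_pos gamma_pos by (simp add: A_def barrier_coeff_def)

lemma barrier_shift_nonneg: "0 \<le> barrier_shift \<xi> \<delta>"
  using delta_pos delta_le_xi by (simp add: barrier_shift_def field_simps)

lemma A_mult_c_powr: "A * c powr (-\<delta>) = \<xi> * exp (-\<xi>) / \<delta>"
proof -
  have "\<xi> powr (\<delta> + 1) * \<xi> powr (-\<delta>) = \<xi>"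
    using xi_pos powr_add_eq[of "\<delta> + 1" "-\<delta>" 1 \<xi>] by simp
  hence "barrier_coeff \<xi> \<delta> * \<xi> powr (-\<delta>) = \<xi> * exp (-\<xi>) / \<delta>"
    by (simp add: barrier_coeff_def field_simps)
  moreover have "c powr (-\<delta>) = \<xi> powr (-\<delta>) * \<gamma> powr \<delta>"
    unfolding c_def powr_divide powr_minus[of \<gamma>] by (simp add: divide_inverse)
  hence "A * c powr (-\<delta>) = barrier_coeff \<xi> \<delta> * \<xi> powr (-\<delta>)"
    using gamma_pos by (simp add: A_def)
  ultimately show ?thesis by simp
qed

lemma gamma_mult_c: "\<gamma> * c = \<xi>"
  using gamma_pos by (simp add: c_def)

lemma branches_eq_at_c: "A * c powr (-\<delta>) - barrier_shift \<xi> \<delta> = exp (- \<gamma> * c)"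
  using delta_pos by (simp add: A_mult_c_powr gamma_mult_c barrier_shift_def field_simps)

lemma branch_derivs_eq_at_c: "- \<delta> * A * c powr (-\<delta> - 1) = - \<gamma> * exp (- \<gamma> * c)"
proof -
  have "c powr (-\<delta> - 1) = c powr (-\<delta>) / c"
    using c_pos by (simp add: powr_diff)
  hence "- \<delta> * A * c powr (-\<delta> - 1) = - \<delta> * (A * c powr (-\<delta>)) / c" by simp
  also have "\<dots> = - \<gamma> * exp (-\<xi>)"
    unfolding A_mult_c_powr using delta_pos gamma_pos xi_pos by (simp add: c_def field_simps)
  finally show ?thesis by (simp add: gamma_mult_c)
qed

lemma has_real_derivative_\<phi>:
  assumes s: "0 < s"
  shows "(\<phi> has_real_derivative \<phi>' s) (at s)"
proof -
  let ?p = "\<lambda>x. A * x powr (-\<delta>) - barrier_shift \<xi> \<delta>" and ?q = "\<lambda>x. exp (- \<gamma> * x)"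
  have p: "(?p has_real_derivative - \<delta> * A * x powr (-\<delta> - 1)) (at x)" if "0 < x" for x
    using that by (auto intro!: derivative_eq_intros simp: algebra_simps)
  have q: "(?q has_real_derivative - \<gamma> * exp (- \<gamma> * x)) (at x)" for x
    by (auto intro!: derivative_eq_intros)
  consider "s < c" | "s = c" | "c < s" by linarith
  then show ?thesis
  proof cases
    case 1
    have "(\<phi> has_real_derivative - \<delta> * A * s powr (-\<delta> - 1)) (at s)"
      by (rule has_field_derivative_transform_within_open[OF p[OF s], of "{0<..<c}"])
         (use s 1 in \<open>auto simp: \<phi>_def\<close>)
    thus ?thesis using 1 by (simp add: \<phi>'_def)
  next
    case 2
    have "((\<lambda>x. if x < c then ?p x else ?q x) has_real_derivative - \<gamma> * exp (- \<gamma> * c)) (at c)"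
      using p[OF c_pos] q branches_eq_at_c branch_derivs_eq_at_c
      by (intro has_field_derivative_if_glue) auto
    thus ?thesis using 2 by (simp add: \<phi>_def[abs_def] \<phi>'_def)
  next
    case 3
    have "(\<phi> has_real_derivative - \<gamma> * exp (- \<gamma> * s)) (at s)"
      by (rule has_field_derivative_transform_within_open[OF q, of "{c<..}"])
         (use 3 in \<open>auto simp: \<phi>_def\<close>)
    thus ?thesis using 3 by (simp add: \<phi>'_def)
  qed
qed

lemma deriv_\<phi>: "0 < s \<Longrightarrow> deriv \<phi> s = \<phi>' s"
  by (rule DERIV_imp_deriv[OF has_real_derivative_\<phi>])

lemma has_real_derivative_deriv_\<phi>:
  assumes s: "0 < s" "s \<noteq> c"
  shows "(deriv \<phi> has_real_derivative \<phi>'' s) (at s)"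
proof (cases "s < c")
  case True
  have "((\<lambda>x. - \<delta> * A * x powr (-\<delta> - 1)) has_real_derivative
      \<delta> * (\<delta> + 1) * A * s powr (-\<delta> - 2)) (at s)"
    using s by (auto intro!: derivative_eq_intros simp: algebra_simps)
  hence "(deriv \<phi> has_real_derivative \<delta> * (\<delta> + 1) * A * s powr (-\<delta> - 2)) (at s)"
    by (rule has_field_derivative_transform_within_open[of _ _ _ "{0<..<c}"])
       (use s True in \<open>auto simp: deriv_\<phi> \<phi>'_def\<close>)
  thus ?thesis using True by (simp add: \<phi>''_def)
next
  case False
  have "((\<lambda>x. - \<gamma> * exp (- \<gamma> * x)) has_real_derivative \<gamma>\<^sup>2 * exp (- \<gamma> * s)) (at s)"
    by (auto intro!: derivative_eq_intros simp: power2_eq_square)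
  hence "(deriv \<phi> has_real_derivative \<gamma>\<^sup>2 * exp (- \<gamma> * s)) (at s)"
    by (rule has_field_derivative_transform_within_open[of _ _ _ "{c<..}"])
       (use s False c_pos in \<open>auto simp: deriv_\<phi> \<phi>'_def\<close>)
  thus ?thesis using False by (simp add: \<phi>''_def)
qed

lemma \<phi>_pos:
  assumes s: "0 < s"
  shows "0 < \<phi> s"
proof (cases "s < c")
  case True
  have "c powr (-\<delta>) < s powr (-\<delta>)"
    using s True delta_pos by (intro powr_less_mono2_neg) auto
  hence "A * c powr (-\<delta>) < A * s powr (-\<delta>)" using A_pos by simp
  moreover have "\<phi> s = A * s powr (-\<delta>) - barrier_shift \<xi> \<delta>" using True by (simp add: \<phi>_def)
  ultimately have "exp (- \<gamma> * c) < \<phi> s" using branches_eq_at_c by linarith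
  thus ?thesis by (meson exp_gt_zero less_trans)
qed (simp add: \<phi>_def)

lemma \<phi>_le_power: "s < c \<Longrightarrow> \<phi> s \<le> A * s powr (-\<delta>)"
  using barrier_shift_nonneg by (simp add: \<phi>_def)

lemma lipschitz_on_deriv_\<phi>:
  assumes m: "0 < m" "m \<le> c" and M: "c \<le> M"
  shows "(max (\<delta> * (\<delta> + 1) * A * m powr (-\<delta> - 2)) (\<gamma>\<^sup>2))-lipschitz_on {m..M} (deriv \<phi>)"
proof -
  let ?q1 = "\<lambda>x. - \<delta> * A * x powr (-\<delta> - 1)" and ?q2 = "\<lambda>x. - \<gamma> * exp (- \<gamma> * x)"
  have "(\<delta> * (\<delta> + 1) * A * m powr (-\<delta> - 2))-lipschitz_on {m..c} ?q1"
  proof (rule lipschitz_on_atLeastAtMost_if_deriv_bounded)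
    fix x assume x: "x \<in> {m..c}"
    show "(?q1 has_real_derivative \<delta> * (\<delta> + 1) * A * x powr (-\<delta> - 2)) (at x)"
      using x m by (auto intro!: derivative_eq_intros simp: algebra_simps)
    have "x powr (-\<delta> - 2) \<le> m powr (-\<delta> - 2)"
      using x m delta_pos by (intro powr_mono2') auto
    thus "\<bar>\<delta> * (\<delta> + 1) * A * x powr (-\<delta> - 2)\<bar> \<le> \<delta> * (\<delta> + 1) * A * m powr (-\<delta> - 2)"
      using delta_pos A_pos by (simp add: abs_mult)
  qed (use delta_pos A_pos in simp)
  moreover have "(\<gamma>\<^sup>2)-lipschitz_on {c..M} ?q2"
  proof (rule lipschitz_on_atLeastAtMost_if_deriv_bounded)
    fix x assume x: "x \<in> {c..M}"
    show "(?q2 has_real_derivative \<gamma>\<^sup>2 * exp (- \<gamma> * x)) (at x)"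
      by (auto intro!: derivative_eq_intros simp: power2_eq_square)
    have "exp (- \<gamma> * x) \<le> 1" using x c_pos gamma_pos by simp
    thus "\<bar>\<gamma>\<^sup>2 * exp (- \<gamma> * x)\<bar> \<le> \<gamma>\<^sup>2" by (simp add: abs_mult mult_left_le)
  qed simp
  ultimately have "(max (\<delta> * (\<delta> + 1) * A * m powr (-\<delta> - 2)) (\<gamma>\<^sup>2))-lipschitz_on {m..M}
      (\<lambda>x. if x \<le> c then ?q1 x else ?q2 x)"
    using branch_derivs_eq_at_c by (intro lipschitz_on_concat_max)
  moreover have "deriv \<phi> x = (if x \<le> c then ?q1 x else ?q2 x)" if "x \<in> {m..M}" for x
    using that m deriv_\<phi>[of x] branch_derivs_eq_at_c by (auto simp: \<phi>'_def)
  ultimately show ?thesis by (rule lipschitz_on_transform)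
qed

lemma W2inf_loc_\<phi>: "W2inf_loc {0<..} \<phi>"
  unfolding W2inf_loc_def
proof (intro conjI ballI allI impI)
  fix s :: real assume "s \<in> {0<..}"
  thus "\<phi> differentiable (at s)"
    using has_real_derivative_\<phi> real_differentiable_def by auto
next
  fix K :: "real set" assume K: "compact K \<and> K \<subseteq> {0<..}"
  show "\<exists>L. L-lipschitz_on K (deriv \<phi>)"
  proof (cases "K = {}")
    case True
    thus ?thesis by (intro exI[of _ 0]) simp
  next
    case False
    obtain m where m: "m \<in> K" "\<forall>t\<in>K. m \<le> t"
      using compact_attains_inf[of K] K False by blast
    obtain M where M: "\<forall>t\<in>K. t \<le> M"
      using compact_attains_sup[of K] K False by blast
    have "0 < min m c" using m K c_pos by auto
    have "K \<subseteq> {min m c..max M c}" using m M by (auto simp: min_le_iff_disj le_max_iff_disj)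
    have "(max (\<delta> * (\<delta> + 1) * A * (min m c) powr (-\<delta> - 2)) (\<gamma>\<^sup>2))-lipschitz_on
        {min m c..max M c} (deriv \<phi>)"
      using \<open>0 < min m c\<close> by (intro lipschitz_on_deriv_\<phi>) auto
    thus ?thesis using \<open>K \<subseteq> {min m c..max M c}\<close> by (blast intro: lipschitz_on_subset)
  qed
qed


lemma \<phi>_sq_div_deriv_le:
  assumes s: "0 < s" and delta_le_1: "\<delta> \<le> 1"
  shows "(\<phi> s)\<^sup>2 / \<bar>deriv \<phi> s\<bar>
    \<le> (if s < c then \<xi>\<^sup>2 * exp (-\<xi>) / (\<delta>\<^sup>2 * \<gamma>) else exp (- \<gamma> * s) / \<gamma>)"
proof (cases "s < c")
  case True
  define Z where "Z = s powr (-\<delta>)"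
  have Z: "0 < Z" using s by (simp add: Z_def)
  have d: "\<bar>deriv \<phi> s\<bar> = \<delta> * A * Z / s"
    using s True delta_pos A_pos by (simp add: deriv_\<phi> \<phi>'_def Z_def powr_diff abs_mult)
  have "(\<phi> s)\<^sup>2 / \<bar>deriv \<phi> s\<bar> \<le> (A * Z)\<^sup>2 / (\<delta> * A * Z / s)"
    unfolding d using \<phi>_pos[OF s] \<phi>_le_power[OF True] s Z delta_pos A_pos
    by (intro divide_right_mono power_mono) (auto simp: Z_def)
  also have "\<dots> = A * (Z * s) / \<delta>"
    using A_pos Z s delta_pos by (simp add: field_simps power2_eq_square)
  also have "Z * s = s powr (1 - \<delta>)"
    using s powr_add_eq[of "-\<delta>" 1 "1 - \<delta>" s] by (simp add: Z_def)
  also have "A * s powr (1 - \<delta>) / \<delta> \<le> A * c powr (1 - \<delta>) / \<delta>"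
    using A_pos delta_pos delta_le_1 s True by (intro divide_right_mono mult_left_mono powr_mono2) auto
  also have "c powr (1 - \<delta>) = c powr (-\<delta>) * c"
    using c_pos powr_add_eq[of "-\<delta>" 1 "1 - \<delta>" c] by simp
  hence "A * c powr (1 - \<delta>) / \<delta> = (A * c powr (-\<delta>)) * c / \<delta>" by simp
  also have "\<dots> = \<xi>\<^sup>2 * exp (-\<xi>) / (\<delta>\<^sup>2 * \<gamma>)"
    unfolding A_mult_c_powr using delta_pos gamma_pos
    by (simp add: c_def field_simps power2_eq_square)
  finally show ?thesis using True by simp
next
  case False
  thus ?thesis
    using s gamma_pos by (simp add: \<phi>_def deriv_\<phi> \<phi>'_def abs_mult power2_eq_square)
qed

lemma nn_integral_\<phi>_sq_div_deriv:
  assumes delta_le_1: "\<delta> \<le> 1"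
  shows "(\<integral>\<^sup>+ s \<in> {0<..}. ennreal ((\<phi> s)\<^sup>2 / \<bar>deriv \<phi> s\<bar>) \<partial>lborel)
    \<le> ennreal ((\<xi> ^ 3 * exp (-\<xi>) / \<delta>\<^sup>2 + exp (-\<xi>)) / \<gamma>\<^sup>2)"
proof -
  define h where "h = \<xi>\<^sup>2 * exp (-\<xi>) / (\<delta>\<^sup>2 * \<gamma>)"
  have h: "0 \<le> h" using gamma_pos by (simp add: h_def)
  have "ennreal ((\<phi> s)\<^sup>2 / \<bar>deriv \<phi> s\<bar>) * indicator {0<..} s
      \<le> ennreal h * indicator {0<..<c} s + ennreal (exp (- \<gamma> * s) / \<gamma>) * indicator {c..} s" for s
  proof (cases "0 < s")
    case True
    thus ?thesis
      using \<phi>_sq_div_deriv_le[OF True delta_le_1]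
      by (cases "s < c") (simp_all add: indicator_def h_def ennreal_leI)
  qed (simp add: indicator_def)
  hence "(\<integral>\<^sup>+ s \<in> {0<..}. ennreal ((\<phi> s)\<^sup>2 / \<bar>deriv \<phi> s\<bar>) \<partial>lborel)
      \<le> (\<integral>\<^sup>+ s. ennreal h * indicator {0<..<c} s + ennreal (exp (- \<gamma> * s) / \<gamma>) * indicator {c..} s \<partial>lborel)"
    by (rule nn_integral_mono)
  also have "\<dots> = (\<integral>\<^sup>+ s. ennreal h * indicator {0<..<c} s \<partial>lborel)
      + (\<integral>\<^sup>+ s. ennreal (exp (- \<gamma> * s) / \<gamma>) * indicator {c..} s \<partial>lborel)"
    by (rule nn_integral_add) auto
  also have "(\<integral>\<^sup>+ s. ennreal h * indicator {0<..<c} s \<partial>lborel) = ennreal (h * c)"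
    using c_pos h by (simp add: nn_integral_cmult_indicator ennreal_mult)
  also have "(\<integral>\<^sup>+ s. ennreal (exp (- \<gamma> * s) / \<gamma>) * indicator {c..} s \<partial>lborel)
      = ennreal (exp (-\<xi>) / \<gamma>\<^sup>2)"
  proof (rule nn_integral_has_integral_lebesgue')
    have "((\<lambda>x. exp (- \<gamma> * x) * (1 / \<gamma>)) has_integral (exp (- \<gamma> * c) / \<gamma> * (1 / \<gamma>))) {c..}"
      by (rule has_integral_mult_left[OF has_integral_exp_minus_to_infinity[OF gamma_pos]])
    thus "((\<lambda>x. exp (- \<gamma> * x) / \<gamma>) has_integral exp (-\<xi>) / \<gamma>\<^sup>2) {c..}"
      by (simp add: gamma_mult_c power2_eq_square)
  qed (use gamma_pos in simp)
  also have "ennreal (h * c) + ennreal (exp (-\<xi>) / \<gamma>\<^sup>2) = ennreal (h * c + exp (-\<xi>) / \<gamma>\<^sup>2)"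
    using h c_pos by (intro ennreal_plus[symmetric]) auto
  also have "h * c + exp (-\<xi>) / \<gamma>\<^sup>2 = (\<xi> ^ 3 * exp (-\<xi>) / \<delta>\<^sup>2 + exp (-\<xi>)) / \<gamma>\<^sup>2"
    using gamma_pos delta_pos
    by (simp add: h_def c_def field_simps power2_eq_square power3_eq_cube)
  finally show ?thesis .
qed

lemma AE_radial_operator_ge:
  fixes n :: nat and k :: real and F :: "real \<Rightarrow> real"
  assumes "\<And>s. 0 < s \<Longrightarrow> s \<noteq> c \<Longrightarrow>
    k * \<phi> s \<le> radial_operator n s (F s) (deriv F s) (\<phi> s) (\<phi>' s) (\<phi>'' s)"
  shows "AE s in lebesgue. 0 < s \<longrightarrow> (\<exists>\<phi>\<^sub>s\<^sub>s. (deriv \<phi> has_real_derivative \<phi>\<^sub>s\<^sub>s) (at s) \<and>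
    k * \<phi> s \<le> radial_operator n s (F s) (deriv F s) (\<phi> s) (deriv \<phi> s) \<phi>\<^sub>s\<^sub>s)"
  using AE_completion[OF AE_lborel_singleton[of c]]
proof (rule eventually_mono, intro impI exI conjI)
  fix s assume "s \<noteq> c" "0 < s"
  thus "(deriv \<phi> has_real_derivative \<phi>'' s) (at s)"
    by (rule has_real_derivative_deriv_\<phi>[rotated])
  show "k * \<phi> s \<le> radial_operator n s (F s) (deriv F s) (\<phi> s) (deriv \<phi> s) (\<phi>'' s)"
    using assms[OF \<open>0 < s\<close> \<open>s \<noteq> c\<close>] deriv_\<phi>[OF \<open>0 < s\<close>] by simp
qed

lemma radial_operator_\<phi>_power_branch:
  fixes n :: nat and \<alpha> f\<^sub>0 k :: real
  assumes n: "0 < n" and alpha: "2 \<le> \<alpha>" "\<alpha> < real n" and f0: "0 \<le> f\<^sub>0" and c_le_1: "c \<le> 1"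
    and delta: "real n - \<alpha> \<le> real n * \<delta>" and gap: "0 \<le> power_branch_gap n \<alpha> f\<^sub>0 \<delta>"
    and k: "k \<le> power_branch_gap n \<alpha> f\<^sub>0 \<delta> * \<xi> powr (-2 / real n)"
    and s: "0 < s" "s < c"
  shows "k * \<gamma> powr (2 / real n) * \<phi> s
    \<le> radial_operator n s (f\<^sub>0 / (real n - \<alpha>) * s powr ((real n - \<alpha>) / real n))
        (f\<^sub>0 / real n * s powr (-\<alpha> / real n)) (\<phi> s) (\<phi>' s) (\<phi>'' s)"
proof -
  let ?gap = "power_branch_gap n \<alpha> f\<^sub>0 \<delta>"
  have "k * \<gamma> powr (2 / real n) \<le> ?gap * \<xi> powr (-2 / real n) * \<gamma> powr (2 / real n)"
    using k by (intro mult_right_mono) auto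
  also have "\<dots> = ?gap * c powr (-2 / real n)"
  proof -
    have g: "\<gamma> powr (-2 / real n) = inverse (\<gamma> powr (2 / real n))"
      using powr_minus[of \<gamma> "2 / real n"] by simp
    have "c powr (-2 / real n) = \<xi> powr (-2 / real n) / \<gamma> powr (-2 / real n)"
      unfolding c_def by (rule powr_divide)
    also have "\<dots> = \<xi> powr (-2 / real n) * \<gamma> powr (2 / real n)"
      unfolding g using gamma_pos by (simp add: divide_inverse)
    finally show ?thesis by simp
  qed
  also have "\<dots> \<le> ?gap * s powr (-2 / real n)"
    using gap s n by (intro mult_left_mono powr_mono2') auto
  finally have "k * \<gamma> powr (2 / real n) * \<phi> s \<le> ?gap * s powr (-2 / real n) * \<phi> s"
    using \<phi>_pos[OF s(1)] by (intro mult_right_mono) auto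
  also have "\<dots> \<le> radial_operator n s (f\<^sub>0 / (real n - \<alpha>) * s powr ((real n - \<alpha>) / real n))
        (f\<^sub>0 / real n * s powr (-\<alpha> / real n)) (\<phi> s) (\<phi>' s) (\<phi>'' s)"
    using radial_operator_power_ge[OF n alpha f0 s(1) _ A_pos barrier_shift_nonneg delta gap] s c_le_1
    by (simp add: \<phi>_def \<phi>'_def \<phi>''_def)
  finally show ?thesis .
qed

lemma radial_operator_\<phi>_exp_branch:
  fixes n :: nat and k F F\<^sub>s :: real
  assumes n: "2 \<le> n" and xi: "4 * (real n - 1) \<le> real n * \<xi>"
    and k: "k \<le> real n * \<xi> powr ((real n - 2) / real n) * (real n * \<xi> - 4 * (real n - 1))"
    and s: "c < s" and F: "F\<^sub>s \<le> \<gamma> * F"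
  shows "k * \<gamma> powr (2 / real n) * \<phi> s \<le> radial_operator n s F F\<^sub>s (\<phi> s) (\<phi>' s) (\<phi>'' s)"
proof -
  define q where "q = (real n - 2) / real n"
  have "0 < s" using s c_pos by simp
  have "\<gamma> * c \<le> \<gamma> * s" using s gamma_pos by simp
  hence "\<xi> \<le> \<gamma> * s" by (simp add: gamma_mult_c)
  have gamma_split: "\<gamma> * s powr q = (\<gamma> * s) powr q * \<gamma> powr (2 / real n)"
  proof -
    have "\<gamma> powr q * \<gamma> powr (2 / real n) = \<gamma>"
      using powr_add_eq[of q "2 / real n" 1 \<gamma>] gamma_pos n by (simp add: q_def field_simps)
    thus ?thesis using gamma_pos \<open>0 < s\<close> by (simp add: powr_mult)
  qed
  have "k * \<gamma> powr (2 / real n) \<le> real n * \<xi> powr q * (real n * \<xi> - 4 * (real n - 1)) * \<gamma> powr (2 / real n)"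
    using k by (intro mult_right_mono) (auto simp: q_def)
  also have "\<dots> \<le> real n * (\<gamma> * s) powr q * (real n * (\<gamma> * s) - 4 * (real n - 1)) * \<gamma> powr (2 / real n)"
  proof (rule mult_right_mono[OF mult_mono])
    show "real n * \<xi> powr q \<le> real n * (\<gamma> * s) powr q"
      using \<open>\<xi> \<le> \<gamma> * s\<close> xi_pos n by (simp add: q_def powr_mono2)
    show "real n * \<xi> - 4 * (real n - 1) \<le> real n * (\<gamma> * s) - 4 * (real n - 1)"
      using \<open>\<xi> \<le> \<gamma> * s\<close> by (intro diff_right_mono mult_left_mono) auto
  qed (use xi in auto)
  also have "\<dots> = real n * \<gamma> * s powr q * (real n * \<gamma> * s - 4 * (real n - 1))"
    by (simp add: gamma_split ac_simps)
  finally have "k * \<gamma> powr (2 / real n) * \<phi> s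
      \<le> real n * \<gamma> * s powr q * (real n * \<gamma> * s - 4 * (real n - 1)) * \<phi> s"
    using \<phi>_pos[OF \<open>0 < s\<close>] by (intro mult_right_mono) auto
  also have "\<dots> \<le> radial_operator n s F F\<^sub>s (\<phi> s) (\<phi>' s) (\<phi>'' s)"
    using radial_operator_exp_ge[OF _ \<open>0 < s\<close> F, where E = "exp (- \<gamma> * s)"] n s
    by (simp add: \<phi>_def \<phi>'_def \<phi>''_def q_def)
  finally show ?thesis .
qed

lemma radial_operator_Fpot_ge:
  fixes n :: nat and \<alpha> f\<^sub>0 T k :: real and f :: "real \<Rightarrow> real"
  assumes profile: "power_law_profile n \<alpha> f\<^sub>0 T f"
    and n: "2 \<le> n" and alpha: "2 \<le> \<alpha>" and f0: "0 \<le> f\<^sub>0" and c: "c < T" "c \<le> 1"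
    and delta: "real n - \<alpha> \<le> real n * \<delta>" and gap: "0 \<le> power_branch_gap n \<alpha> f\<^sub>0 \<delta>"
    and xi: "1 \<le> \<xi>" "4 * (real n - 1) \<le> real n * \<xi>"
    and k: "k \<le> power_branch_gap n \<alpha> f\<^sub>0 \<delta> * \<xi> powr (-2 / real n)"
      "k \<le> real n * \<xi> powr ((real n - 2) / real n) * (real n * \<xi> - 4 * (real n - 1))"
    and s: "0 < s" "s \<noteq> c"
  shows "k * \<gamma> powr (2 / real n) * \<phi> s
    \<le> radial_operator n s (Fpot n f s) (deriv (Fpot n f) s) (\<phi> s) (\<phi>' s) (\<phi>'' s)"
proof -
  interpret profile: power_law_profile n \<alpha> f\<^sub>0 T f by (rule profile)
  show ?thesis
  proof (cases "s < c")
    case True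
    thus ?thesis
      using radial_operator_\<phi>_power_branch[OF _ alpha profile.alpha_less f0 c(2) delta gap k(1) s(1) True]
        n s c by (simp add: profile.Fpot_eq_power_law profile.deriv_Fpot profile.density_root_eq_power_law)
  next
    case False
    hence "c < s" using s(2) by simp
    moreover have "deriv (Fpot n f) s \<le> \<gamma> * Fpot n f s"
      using profile.density_root_le_Fpot[of c \<gamma> s] \<open>c < s\<close> alpha f0 c c_pos xi(1)
      by (simp add: profile.deriv_Fpot gamma_mult_c)
    ultimately show ?thesis by (rule radial_operator_\<phi>_exp_branch[OF n xi(2) k(2)])
  qed
qed

end


lemma admissible_parameters:
  fixes n :: nat and \<alpha> f\<^sub>0 \<xi> \<delta> :: real
  assumes n: "3 \<le> n" and alpha: "\<alpha> < real n" and f0: "0 < f\<^sub>0" and xi: "4 - 4 / real n < \<xi>"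
    and delta: "max ((real n - \<alpha>) / real n)
         ((((real n - \<alpha>) * (3 * real n - 4) - f\<^sub>0)
           + sqrt ((((real n - \<alpha>) * (3 * real n - 4) - f\<^sub>0))\<^sup>2 + 4 * f\<^sub>0 * (real n - \<alpha>)\<^sup>2))
          / (2 * real n * (real n - \<alpha>))) < \<delta>"
  shows "1 < \<xi>" "4 * (real n - 1) < real n * \<xi>" "real n - \<alpha> \<le> real n * \<delta>"
    "0 < power_branch_gap n \<alpha> f\<^sub>0 \<delta>"
proof -
  have "4 / real n \<le> 4 / 3" using n by (simp add: field_simps)
  thus "1 < \<xi>" using xi by linarith
  show "4 * (real n - 1) < real n * \<xi>" using xi n by (simp add: field_simps)
  show "real n - \<alpha> \<le> real n * \<delta>" using delta n by (simp add: field_simps)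
  show "0 < power_branch_gap n \<alpha> f\<^sub>0 \<delta>" using delta alpha f0 n by (intro power_branch_gap_pos) auto
qed

lemma junction_in_power_region:
  fixes T \<gamma> \<xi> :: real
  assumes T: "0 < T" "T < 1" and gamma: "4 / T < \<gamma>" and xi: "\<xi> \<le> 4"
  shows "4 < \<gamma>" "\<xi> / \<gamma> < T" "\<xi> / \<gamma> \<le> 1"
proof -
  have "4 < T * \<gamma>" using gamma T(1) by (simp add: pos_divide_less_eq mult.commute)
  moreover have "0 < \<gamma>" using calculation T(1) zero_less_mult_pos[of T \<gamma>] by simp
  moreover have "T * \<gamma> \<le> \<gamma>" using calculation T by (intro mult_left_le_one_le) auto
  ultimately show "4 < \<gamma>" "\<xi> / \<gamma> < T" "\<xi> / \<gamma> \<le> 1"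
    using xi by (simp_all add: pos_divide_less_eq pos_divide_le_eq)
qed


theorem lemma3p2:
  fixes n :: nat and \<alpha> f\<^sub>0 \<xi> \<delta> :: real
  assumes n: "n \<ge> 3"
    and alpha: "2 < \<alpha>" "\<alpha> < real n"
    and f0: "f\<^sub>0 > 0" "f\<^sub>0 > 2 * real n / \<alpha> * (real n - 2) * (real n - \<alpha>)"
    and xi: "4 - 4 / real n < \<xi>" "\<xi> \<le> 4"
    and delta: "0 < \<delta>" "\<delta> < 1"
      "\<delta> > max ((real n - \<alpha>) / real n)
         ((((real n - \<alpha>) * (3 * real n - 4) - f\<^sub>0)
           + sqrt ((((real n - \<alpha>) * (3 * real n - 4) - f\<^sub>0))\<^sup>2 + 4 * f\<^sub>0 * (real n - \<alpha>)\<^sup>2))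
          / (2 * real n * (real n - \<alpha>)))"
  shows "\<exists>a b k\<^sub>0 K\<^sub>0 :: real. a > 0 \<and> b > 0 \<and> k\<^sub>0 > 0 \<and> K\<^sub>0 > 0 \<and>
    (\<forall>R \<rho> (f :: real \<Rightarrow> real) \<gamma>.
      0 < R \<and> R < 1 \<and> 0 < \<rho> \<and> \<rho> < R / 2 \<and>
      smooth_on {0<..} f \<and> antimono_on {0<..} f \<and> (\<forall>r>0. f r \<ge> 0) \<and>
      (\<forall>r>0. r ^ n \<le> R - \<rho> \<longrightarrow> f r = f\<^sub>0 * r powr (-\<alpha>)) \<and>
      (\<forall>r>0. r ^ n \<ge> R + \<rho> \<longrightarrow> f r = 0) \<and>
      \<gamma> > 4 / (R - \<rho>) \<longrightarrow>
      (let F = Fpot n f;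
           \<phi> = (\<lambda>s::real. if s < \<xi> / \<gamma> then a / \<gamma> powr \<delta> * s powr (-\<delta>) - b
                           else exp (- \<gamma> * s))
       in (\<forall>s>0. \<phi> s > 0) \<and>
          W2inf_loc {0<..} \<phi> \<and>
          (AE s in lebesgue. s > 0 \<longrightarrow>
             (\<exists>\<phi>\<^sub>s\<^sub>s. (deriv \<phi> has_real_derivative \<phi>\<^sub>s\<^sub>s) (at s) \<and>
                real n ^ 2 * s powr ((2 * real n - 2) / real n) * \<phi>\<^sub>s\<^sub>s
                + 4 * (real n ^ 2 - real n) * s powr ((real n - 2) / real n) * deriv \<phi> s
                - real n * F s * deriv \<phi> s - real n * deriv F s * \<phi> s
                \<ge> k\<^sub>0 * \<gamma> powr (2 / real n) * \<phi> s)) \<and>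
          (\<integral>\<^sup>+ s \<in> {0<..}. ennreal ((\<phi> s)\<^sup>2 / \<bar>deriv \<phi> s\<bar>) \<partial>lborel)
             \<le> ennreal (K\<^sub>0 / \<gamma>\<^sup>2)))"
proof -
  \<comment> \<open>The second hypothesis on \<open>f\<^sub>0\<close> says exactly that the second lower bound for \<open>\<delta>\<close>
    is below 1, so that an admissible \<open>\<delta>\<close> exists; the proof itself does not need it.\<close>
  note params = admissible_parameters[OF n alpha(2) f0(1) xi(1) delta(3)]
  define k\<^sub>0 where "k\<^sub>0 = min (power_branch_gap n \<alpha> f\<^sub>0 \<delta> * \<xi> powr (-2 / real n))
    (real n * \<xi> powr ((real n - 2) / real n) * (real n * \<xi> - 4 * (real n - 1)))"
  define K\<^sub>0 where "K\<^sub>0 = \<xi> ^ 3 * exp (-\<xi>) / \<delta>\<^sup>2 + exp (-\<xi>)"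
  have constants_pos: "0 < barrier_coeff \<xi> \<delta>" "0 < barrier_shift \<xi> \<delta>" "0 < k\<^sub>0" "0 < K\<^sub>0"
    using params delta(1,2) n
    by (simp_all add: barrier_coeff_def barrier_shift_def k\<^sub>0_def K\<^sub>0_def add_pos_pos)
  show ?thesis
  proof (rule exI[of _ "barrier_coeff \<xi> \<delta>"], rule exI[of _ "barrier_shift \<xi> \<delta>"],
      rule exI[of _ k\<^sub>0], rule exI[of _ K\<^sub>0], intro conjI constants_pos allI impI, elim conjE, goal_cases)
    case (1 R \<rho> f \<gamma>)
    have T: "0 < R - \<rho>" "R - \<rho> < 1" using 1 by auto
    note junction = junction_in_power_region[OF T 1(10) xi(2)]
    have profile: "power_law_profile n \<alpha> f\<^sub>0 (R - \<rho>) f"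
      by unfold_locales (use n alpha T 1(5-8) in \<open>auto intro: smooth_on_imp_isCont\<close>)
    interpret barrier \<xi> \<delta> \<gamma>
      by unfold_locales (use delta params junction in auto)
    have c: "c < R - \<rho>" "c \<le> 1" using junction by (simp_all add: c_def)
    have \<phi>_eq: "(\<lambda>s. if s < \<xi> / \<gamma> then barrier_coeff \<xi> \<delta> / \<gamma> powr \<delta> * s powr (-\<delta>)
        - barrier_shift \<xi> \<delta> else exp (- \<gamma> * s)) = \<phi>"
      by (simp add: fun_eq_iff \<phi>_def A_def c_def)
    have "0 \<le> power_branch_gap n \<alpha> f\<^sub>0 \<delta>" "k\<^sub>0 \<le> power_branch_gap n \<alpha> f\<^sub>0 \<delta> * \<xi> powr (-2 / real n)"
      "k\<^sub>0 \<le> real n * \<xi> powr ((real n - 2) / real n) * (real n * \<xi> - 4 * (real n - 1))"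
      using params by (simp_all add: k\<^sub>0_def)
    note op = radial_operator_Fpot_ge[OF profile _ _ _ c params(3) this(1) _ _ this(2,3)]
    show ?case
      unfolding Let_def \<phi>_eq K\<^sub>0_def
      using \<phi>_pos W2inf_loc_\<phi> nn_integral_\<phi>_sq_div_deriv[OF less_imp_le[OF delta(2)]]
        AE_radial_operator_ge[OF op] n alpha f0 params
      by (simp add: radial_operator_def)
  qed
qed

end
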